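(* Fix $N\ge1$. For any $T\ge1$, any $\varkappa\in\mathbb{P}'_T$ with $\varkappa_T>N$, and any $M\ge N$, $$\mathscr{D}_N\widetilde{\mathsf{F}}^{(M)}_\varkappa(u_1,\ldots,u_T\mid\mathbf{a},\boldsymbol\nu)=q^T(1-\nu_1\cdots\nu_N)\,\widetilde{\mathsf{F}}^{(M)}_\varkappa(u_1,\ldots,u_T\mid\mathbf{a},\boldsymbol\nu).$$ Moreover, for any $\ell\ge1$ and $N_1\ge\ldots\ge N_\ell\ge1$ with $N_1\le N$, $$\mathscr{D}_{N_\ell}\cdots\mathscr{D}_{N_1}\widetilde{\mathsf{F}}^{(M)}_\varkappa(u_1,\ldots,u_T\mid\mathbf{a},\boldsymbol\nu)=q^{\ell T}\,\widetilde{\mathsf{F}}^{(M)}_\varkappa(u_1,\ldots,u_T\mid\mathbf{a},\boldsymbol\nu)\cdot\bigl(\mathscr{D}_{N_\ell}\cdots\mathscr{D}_{N_1}1\bigr).$$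
   Context: Fix $q\in(0,1)$; $(z;q)_k=\prod_{i=0}^{k-1}(1-zq^i)$. Parameters: $u_1,u_2,\ldots\in(-\infty,0)$, $a_1,a_2,\ldots\in(0,\infty)$, $\nu_1,\nu_2,\ldots\in(0,1)$ with $a_i,\nu_i$ uniformly bounded away from the endpoints of their intervals, and with $a_i\mathsf{c}_j<1$ for all $i,j$, where $\mathsf{c}_j:=\nu_j/a_j$. $\mathbb{P}'_T$ is the set of integer partitions $\varkappa=(\varkappa_1\ge\ldots\ge\varkappa_T\ge1)$ with exactly $T$ positive parts; write $k_r:=\#\{i:\varkappa_i=r\}$. Define $$\mathsf{F}^{\mathrm{stoch}}_\varkappa(u_1,\ldots,u_T\mid\mathbf{a},\boldsymbol\nu):=\prod_{r\ge1}\frac{(\nu_r;q)_{k_r}}{(q;q)_{k_r}}\sum_{\sigma\in S_T}\sigma\Bigl(\prod_{1\le\alpha<\beta\le T}\frac{u_\alpha-qu_\beta}{u_\alpha-u_\beta}\prod_{i=1}^T\frac{1-q}{1-a_{\varkappa_i}u_i}\prod_{j=1}^{\varkappa_i-1}\frac{\nu_j-a_ju_i}{1-a_ju_i}\Bigr),$$ where $\sigma$ acts by permuting the variables $u_1,\ldots,u_T$ (not the $\varkappa_i$). Set $\Phi_M(u_1,\ldots,u_T):=\prod_{i=1}^T\prod_{j=1}^M(1-a_ju_i)$ and $\widetilde{\mathsf{F}}^{(M)}_\varkappa:=\Phi_M\,\mathsf{F}^{\mathrm{stoch}}_\varkappa$. $\mathscr{T}_{q;x}$ is the $q$-shift $x\mapsto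 qx$ in the variable $x$, and the operator $\mathscr{D}_N$ acts on functions of the $a_i$'s and $\nu_i$'s by $\mathscr{D}_N=\sum_{r=1}^N(1-\nu_r)\bigl(\prod_{1\le i\le N,\,i\ne r}\frac{a_i-\nu_ia_r}{a_i-a_r}\bigr)\mathscr{T}_{q;a_r}\mathscr{T}_{q;\nu_r}$; products of operators mean composition (rightmost first). *)

theory Defs
  imports Complex_Main "HOL-Combinatorics.Permutations"
begin

definition qpoch :: "real \<Rightarrow> real \<Rightarrow> nat \<Rightarrow> real" where
  "qpoch q z k = (\<Prod>i<k. (1 - z * q ^ i))"

text \<open>Partitions kappa in P'_T are lists [kappa_1,...,kappa_T], weakly decreasing,
  all parts positive; kappa_i = kappa ! (i - 1).  Variables u_1..u_T are u 1..u T;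
  parameters a_j, nu_j are a j, nu j (index 0 unused).\<close>
definition partP' :: "nat \<Rightarrow> nat list \<Rightarrow> bool" where
  "partP' T kappa \<longleftrightarrow> length kappa = T \<and> sorted_wrt (\<ge>) kappa \<and> (\<forall>x\<in>set kappa. x \<ge> 1)"

definition multip :: "nat list \<Rightarrow> nat \<Rightarrow> nat" where
  "multip kappa r = length (filter (\<lambda>x. x = r) kappa)"

definition Fterm :: "real \<Rightarrow> nat list \<Rightarrow> (nat \<Rightarrow> real) \<Rightarrow> (nat \<Rightarrow> real) \<Rightarrow> (nat \<Rightarrow> real) \<Rightarrow> real" where
  "Fterm q kappa u a nu =
     (let T = length kappa in
      (\<Prod>\<alpha>\<in>{1..T}. \<Prod>\<beta>\<in>{\<alpha><..T}. (u \<alpha> - q * u \<beta>) / (u \<alpha> - u \<beta>)) *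
      (\<Prod>i\<in>{1..T}. (1 - q) / (1 - a (kappa ! (i - 1)) * u i) *
          (\<Prod>j\<in>{1..<kappa ! (i - 1)}. (nu j - a j * u i) / (1 - a j * u i))))"

definition Fstoch :: "real \<Rightarrow> nat list \<Rightarrow> (nat \<Rightarrow> real) \<Rightarrow> (nat \<Rightarrow> real) \<Rightarrow> (nat \<Rightarrow> real) \<Rightarrow> real" where
  "Fstoch q kappa u a nu =
     (\<Prod>r\<in>set kappa. qpoch q (nu r) (multip kappa r) / qpoch q q (multip kappa r)) *
     (\<Sum>\<sigma>\<in>{\<sigma>. \<sigma> permutes {1..length kappa}}. Fterm q kappa (u \<circ> \<sigma>) a nu)"

definition Phi :: "nat \<Rightarrow> nat \<Rightarrow> (nat \<Rightarrow> real) \<Rightarrow> (nat \<Rightarrow> real) \<Rightarrow> real" where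
  "Phi M T u a = (\<Prod>i\<in>{1..T}. \<Prod>j\<in>{1..M}. (1 - a j * u i))"

definition Ftilde :: "real \<Rightarrow> nat \<Rightarrow> nat list \<Rightarrow> (nat \<Rightarrow> real) \<Rightarrow> (nat \<Rightarrow> real) \<Rightarrow> (nat \<Rightarrow> real) \<Rightarrow> real" where
  "Ftilde q M kappa u a nu = Phi M (length kappa) u a * Fstoch q kappa u a nu"

definition Dop :: "real \<Rightarrow> nat \<Rightarrow> ((nat \<Rightarrow> real) \<Rightarrow> (nat \<Rightarrow> real) \<Rightarrow> real)
                   \<Rightarrow> (nat \<Rightarrow> real) \<Rightarrow> (nat \<Rightarrow> real) \<Rightarrow> real" where
  "Dop q N f = (\<lambda>a nu. \<Sum>r\<in>{1..N}. (1 - nu r) *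
      (\<Prod>i\<in>{1..N} - {r}. (a i - nu i * a r) / (a i - a r)) *
      f (a(r := q * a r)) (nu(r := q * nu r)))"

text \<open>Dcomp q [N_1,...,N_l] f = D_{N_l} ... D_{N_1} f  (D_{N_1} applied first).\<close>
definition Dcomp :: "real \<Rightarrow> nat list \<Rightarrow> ((nat \<Rightarrow> real) \<Rightarrow> (nat \<Rightarrow> real) \<Rightarrow> real)
                   \<Rightarrow> (nat \<Rightarrow> real) \<Rightarrow> (nat \<Rightarrow> real) \<Rightarrow> real" where
  "Dcomp q Ns f = fold (\<lambda>N g. Dop q N g) Ns f"

end

theory Submission
  imports Defs
begin

text \<open>For \<open>1 \<le> r \<le> N\<close> the index \<open>r\<close> lies below every part of \<open>\<kappa>\<close> and is at most \<open>M\<close>, so the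
  parameters \<open>a r, \<nu> r\<close> enter \<open>Ftilde\<close> only through the factor \<open>\<Prod>i. \<nu> r - a r * u i\<close>: the
  denominators \<open>1 - a r * u i\<close> of \<open>Fstoch\<close> are cancelled by \<open>Phi\<close>. Hence the \<open>q\<close>-shift of
  \<open>(a r, \<nu> r)\<close> multiplies \<open>Ftilde\<close> by \<open>q ^ T\<close>, and \<open>Ftilde\<close> can be pulled out of every
  \<open>D\<^sub>n\<close> with \<open>n \<le> N\<close> at the cost of that factor. Finally \<open>D\<^sub>N 1 = 1 - \<nu> 1 \<cdots> \<nu> N\<close> is the value
  at \<open>z = 0\<close> of the partial fraction expansion of \<open>\<Prod>i. (a i - \<nu> i * z) / (a i - z)\<close>.\<close>

text \<open>The values \<open>a r = 0, \<nu> r = 1\<close> turn every factor involving \<open>(a r, \<nu> r)\<close> into \<open>1\<close>.\<close>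

lemma Fterm_factor_out:
  assumes r: "1 \<le> r" "\<forall>x\<in>set kappa. r < x"
  shows "Fterm q kappa w a nu = Fterm q kappa w (a(r := 0)) (nu(r := 1)) *
           (\<Prod>i\<in>{1..length kappa}. (nu r - a r * w i) / (1 - a r * w i))"
proof -
  let ?f = "\<lambda>a nu i j. (nu j - a j * w i) / (1 - a j * w i)"
  let ?g = "\<lambda>a nu i. (1 - q) / (1 - a (kappa ! (i - 1)) * w i) *
                      (\<Prod>j\<in>{1..<kappa ! (i - 1)}. ?f a nu i j)"
  have "?g a nu i = ?g (a(r := 0)) (nu(r := 1)) i * ?f a nu i r"
    if "i \<in> {1..length kappa}" for i
  proof -
    have "kappa ! (i - 1) \<in> set kappa" using that by auto
    with r have rA: "r \<in> {1..<kappa ! (i - 1)}" by auto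
    have "(\<Prod>j\<in>{1..<kappa ! (i - 1)}. ?f (a(r := 0)) (nu(r := 1)) i j)
        = (\<Prod>j\<in>{1..<kappa ! (i - 1)} - {r}. ?f a nu i j)"
      by (subst prod.remove[OF _ rA]) (auto intro!: prod.cong)
    moreover have "(\<Prod>j\<in>{1..<kappa ! (i - 1)}. ?f a nu i j)
        = ?f a nu i r * (\<Prod>j\<in>{1..<kappa ! (i - 1)} - {r}. ?f a nu i j)"
      using rA by (rule prod.remove[rotated]) simp
    moreover have "kappa ! (i - 1) \<noteq> r" using rA by simp
    ultimately show ?thesis by (simp only: mult_ac fun_upd_other not_False_eq_True)
  qed
  then have "(\<Prod>i\<in>{1..length kappa}. ?g a nu i)
      = (\<Prod>i\<in>{1..length kappa}. ?g (a(r := 0)) (nu(r := 1)) i) * (\<Prod>i\<in>{1..length kappa}. ?f a nu i r)"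
    unfolding prod.distrib[symmetric] by (rule prod.cong[OF refl])
  then show ?thesis
    unfolding Fterm_def Let_def by (simp only: mult.assoc)
qed

lemma Phi_factor_out:
  assumes "r \<in> {1..M}"
  shows "Phi M T u a = Phi M T u (a(r := 0)) * (\<Prod>i\<in>{1..T}. 1 - a r * u i)"
proof -
  have "(\<Prod>j\<in>{1..M}. 1 - a j * u i) = (\<Prod>j\<in>{1..M}. 1 - (a(r := 0)) j * u i) * (1 - a r * u i)"
    for i
  proof -
    have "(\<Prod>j\<in>{1..M}. 1 - (a(r := 0)) j * u i) = (\<Prod>j\<in>{1..M} - {r}. 1 - a j * u i)"
      by (subst prod.remove[OF _ assms]) (auto intro!: prod.cong)
    moreover have "(\<Prod>j\<in>{1..M}. 1 - a j * u i) = (1 - a r * u i) * (\<Prod>j\<in>{1..M} - {r}. 1 - a j * u i)"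
      using assms by (rule prod.remove[rotated]) simp
    ultimately show ?thesis by (simp only: mult.commute)
  qed
  then show ?thesis
    unfolding Phi_def prod.distrib[symmetric] by simp
qed

lemma Ftilde_factor_out:
  assumes r: "1 \<le> r" "r \<le> M" "\<forall>x\<in>set kappa. r < x"
    and nz: "\<forall>i\<in>{1..length kappa}. a r * u i \<noteq> 1"
  shows "Ftilde q M kappa u a nu
    = Ftilde q M kappa u (a(r := 0)) (nu(r := 1)) * (\<Prod>i\<in>{1..length kappa}. nu r - a r * u i)"
proof -
  have rM: "r \<in> {1..M}" using r by simp
  let ?T = "length kappa"
  let ?S = "{\<sigma>. \<sigma> permutes {1..?T}}"
  let ?F = "\<lambda>a nu. \<Sum>\<sigma>\<in>?S. Fterm q kappa (u \<circ> \<sigma>) a nu"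
  let ?C = "\<lambda>nu. \<Prod>s\<in>set kappa. qpoch q (nu s) (multip kappa s) / qpoch q q (multip kappa s)"
  have C: "?C (nu(r := 1)) = ?C nu"
    using r(3) by (intro prod.cong) auto
  have "Fterm q kappa (u \<circ> \<sigma>) a nu = Fterm q kappa (u \<circ> \<sigma>) (a(r := 0)) (nu(r := 1)) *
      (\<Prod>i\<in>{1..?T}. (nu r - a r * u i) / (1 - a r * u i))" if "\<sigma> \<in> ?S" for \<sigma>
    using Fterm_factor_out[OF r(1,3), of q "u \<circ> \<sigma>" a nu]
      prod.permute[of \<sigma> "{1..?T}" "\<lambda>i. (nu r - a r * u i) / (1 - a r * u i)"] that
    by (simp add: comp_def)
  then have F: "?F a nu = ?F (a(r := 0)) (nu(r := 1)) *
      (\<Prod>i\<in>{1..?T}. (nu r - a r * u i) / (1 - a r * u i))"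
    by (simp add: sum_distrib_right)
  have cancel: "(\<Prod>i\<in>{1..?T}. 1 - a r * u i) * (\<Prod>i\<in>{1..?T}. (nu r - a r * u i) / (1 - a r * u i))
      = (\<Prod>i\<in>{1..?T}. nu r - a r * u i)"
    unfolding prod.distrib[symmetric] using nz by (intro prod.cong) auto
  have "Ftilde q M kappa u a nu = Phi M ?T u (a(r := 0)) * (?C nu * ?F (a(r := 0)) (nu(r := 1)))
      * ((\<Prod>i\<in>{1..?T}. 1 - a r * u i) * (\<Prod>i\<in>{1..?T}. (nu r - a r * u i) / (1 - a r * u i)))"
    unfolding Ftilde_def Fstoch_def F Phi_factor_out[OF rM, of ?T u a] by (simp only: mult_ac)
  then show ?thesis
    unfolding Ftilde_def Fstoch_def C cancel by simp
qed

lemma Ftilde_shift: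
  assumes r: "1 \<le> r" "r \<le> M" "\<forall>x\<in>set kappa. r < x"
    and nz: "\<forall>i\<in>{1..length kappa}. a r * u i \<noteq> 1 \<and> c * a r * u i \<noteq> 1"
  shows "Ftilde q M kappa u (a(r := c * a r)) (nu(r := c * nu r))
    = c ^ length kappa * Ftilde q M kappa u a nu"
proof -
  have "(\<Prod>i\<in>{1..length kappa}. c * nu r - c * a r * u i)
      = c ^ length kappa * (\<Prod>i\<in>{1..length kappa}. nu r - a r * u i)"
  proof -
    have "(\<Prod>i\<in>{1..length kappa}. c * nu r - c * a r * u i)
        = (\<Prod>i\<in>{1..length kappa}. c * (nu r - a r * u i))"
      by (simp add: right_diff_distrib mult.assoc)
    then show ?thesis by (simp add: prod.distrib)
  qed
  then show ?thesis
    using Ftilde_factor_out[OF r, of "a(r := c * a r)" u q "nu(r := c * nu r)"]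
      Ftilde_factor_out[OF r, of a u q nu] nz
    by (simp add: mult.assoc)
qed

lemma Ftilde_shift_pos:
  assumes "0 < c" "1 \<le> r" "r \<le> M" "\<forall>x\<in>set kappa. r < x"
    and "0 < a r" "\<forall>i\<in>{1..length kappa}. u i < 0"
  shows "Ftilde q M kappa u (a(r := c * a r)) (nu(r := c * nu r))
    = c ^ length kappa * Ftilde q M kappa u a nu"
proof (rule Ftilde_shift)
  show "\<forall>i\<in>{1..length kappa}. a r * u i \<noteq> 1 \<and> c * a r * u i \<noteq> 1"
  proof
    fix i assume "i \<in> {1..length kappa}"
    then have "a r * u i < 0" "c * a r * u i < 0"
      using assms by (auto intro!: mult_pos_neg)
    then show "a r * u i \<noteq> 1 \<and> c * a r * u i \<noteq> 1" by simp
  qed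
qed (use assms in auto)

lemma partial_fraction_step:
  fixes x y z n c :: "'a :: field"
  assumes "x \<noteq> z" "y \<noteq> z" "x \<noteq> y"
  shows "(x - n * z) / (x - z) * (c / (y - z))
    = (1 - n) * x / (x - z) * (c / (y - x)) + c / (y - z) * ((x - n * y) / (x - y))"
proof -
  have "x - z \<noteq> 0" "y - z \<noteq> 0" "x - y \<noteq> 0" "y - x \<noteq> 0" using assms by auto
  then show ?thesis by (simp add: divide_simps) (simp add: algebra_simps)
qed

lemma prod_partial_fractions:
  fixes a nu :: "'i \<Rightarrow> 'a :: field"
  assumes "finite S" "inj_on a S" "\<forall>i\<in>S. a i \<noteq> z"
  shows "(\<Prod>i\<in>S. (a i - nu i * z) / (a i - z)) = (\<Prod>i\<in>S. nu i)
    + (\<Sum>r\<in>S. (1 - nu r) * a r / (a r - z) * (\<Prod>i\<in>S - {r}. (a i - nu i * a r) / (a i - a r)))"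
  using assms
proof (induction S arbitrary: z rule: finite_induct)
  case empty
  then show ?case by simp
next
  case (insert k S)
  let ?g = "\<lambda>z i. (a i - nu i * z) / (a i - z)"
  let ?c = "\<lambda>z r. (1 - nu r) * a r / (a r - z)"
  let ?G = "\<lambda>r. \<Prod>i\<in>S - {r}. ?g (a r) i"
  have inj: "inj_on a S" and ak: "\<forall>i\<in>S. a i \<noteq> a k"
    using insert.prems(1) insert.hyps(2) by (auto simp: inj_on_def)
  have z: "\<forall>i\<in>S. a i \<noteq> z" "a k \<noteq> z" using insert.prems(2) by auto
  have G: "(\<Prod>i\<in>insert k S - {r}. ?g (a r) i) = ?g (a r) k * ?G r" if "r \<in> S" for r
  proof -
    have "insert k S - {r} = insert k (S - {r})" using that insert.hyps(2) by auto
    then show ?thesis using insert.hyps by simp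
  qed
  have step: "?g z k * (?c z r * ?G r) = ?c z k * (?c (a k) r * ?G r) + ?c z r * (?g (a r) k * ?G r)"
    if "r \<in> S" for r
  proof -
    have "?g z k * ?c z r = ?c z k * ?c (a k) r + ?c z r * ?g (a r) k"
      by (rule partial_fraction_step) (use z ak that in auto)
    then show ?thesis by (simp only: mult.assoc[symmetric] distrib_right)
  qed
  have gP: "?g z k * (\<Prod>i\<in>S. nu i) = nu k * (\<Prod>i\<in>S. nu i) + ?c z k * (\<Prod>i\<in>S. nu i)"
    using z(2) by (simp add: field_simps)
  have sum_step: "(\<Sum>r\<in>S. ?g z k * (?c z r * ?G r))
      = (\<Sum>r\<in>S. ?c z k * (?c (a k) r * ?G r)) + (\<Sum>r\<in>S. ?c z r * (?g (a r) k * ?G r))"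
    unfolding sum.distrib[symmetric] by (rule sum.cong[OF refl step])
  have sum_G: "(\<Sum>r\<in>S. ?c z r * (\<Prod>i\<in>insert k S - {r}. ?g (a r) i))
      = (\<Sum>r\<in>S. ?c z r * (?g (a r) k * ?G r))"
    by (rule sum.cong) (simp_all add: G)
  have "insert k S - {k} = S" using insert.hyps(2) by auto
  have "(\<Prod>i\<in>insert k S. ?g z i) = ?g z k * ((\<Prod>i\<in>S. nu i) + (\<Sum>r\<in>S. ?c z r * ?G r))"
    using insert.hyps insert.IH[OF inj z(1)] by simp
  also have "\<dots> = nu k * (\<Prod>i\<in>S. nu i)
      + ?c z k * ((\<Prod>i\<in>S. nu i) + (\<Sum>r\<in>S. ?c (a k) r * ?G r))
      + (\<Sum>r\<in>S. ?c z r * (?g (a r) k * ?G r))"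
    unfolding distrib_left sum_distrib_left gP sum_step by (simp only: add.assoc)
  also have "\<dots> = (\<Prod>i\<in>insert k S. nu i)
      + (\<Sum>r\<in>insert k S. ?c z r * (\<Prod>i\<in>insert k S - {r}. ?g (a r) i))"
    unfolding sum.insert[OF insert.hyps] prod.insert[OF insert.hyps] sum_G \<open>insert k S - {k} = S\<close>
      insert.IH[OF inj ak] by (simp only: add.assoc)
  finally show ?case .
qed

lemma Dop_const_one:
  assumes "\<forall>i\<in>{1..N}. a i \<noteq> 0" "inj_on a {1..N}"
  shows "Dop q N (\<lambda>_ _. 1) a nu = 1 - (\<Prod>i\<in>{1..N}. nu i)"
proof -
  have "(\<Prod>i\<in>{1..N}. (a i - nu i * 0) / (a i - 0)) = (\<Prod>i\<in>{1..N}. nu i) + Dop q N (\<lambda>_ _. 1) a nu"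
    unfolding Dop_def using prod_partial_fractions[of "{1..N}" a 0 nu] assms by simp
  then show ?thesis using assms(1) by simp
qed

lemma Dop_scale_cong:
  assumes "\<And>r. r \<in> {1..n} \<Longrightarrow>
    f (a(r := q * a r)) (nu(r := q * nu r)) = c * g (a(r := q * a r)) (nu(r := q * nu r))"
  shows "Dop q n f a nu = c * Dop q n g a nu"
  unfolding Dop_def sum_distrib_left using assms by (intro sum.cong) auto

lemma Dcomp_homogeneous:
  assumes q: "0 < q" and Ns: "\<forall>n\<in>set Ns. n \<le> N"
    and hom: "\<And>r a nu. r \<in> {1..N} \<Longrightarrow> \<forall>i\<in>{1..N}. 0 < a i \<Longrightarrow>
      F (a(r := q * a r)) (nu(r := q * nu r)) = c * F a nu"
    and a: "\<forall>i\<in>{1..N}. 0 < a i"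
  shows "Dcomp q Ns F a nu = c ^ length Ns * F a nu * Dcomp q Ns (\<lambda>_ _. 1) a nu"
  using Ns a
proof (induction Ns arbitrary: a nu rule: rev_induct)
  case Nil
  then show ?case by (simp add: Dcomp_def)
next
  case (snoc n Ns)
  have "Dop q n (Dcomp q Ns F) a nu = c ^ Suc (length Ns) * F a nu * Dop q n (Dcomp q Ns (\<lambda>_ _. 1)) a nu"
  proof (rule Dop_scale_cong)
    fix r assume r: "r \<in> {1..n}"
    have rN: "r \<in> {1..N}" using r snoc.prems(1) by auto
    have "\<forall>i\<in>{1..N}. 0 < (a(r := q * a r)) i" using snoc.prems(2) q by simp
    then have "Dcomp q Ns F (a(r := q * a r)) (nu(r := q * nu r))
      = c ^ length Ns * F (a(r := q * a r)) (nu(r := q * nu r))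
        * Dcomp q Ns (\<lambda>_ _. 1) (a(r := q * a r)) (nu(r := q * nu r))"
      using snoc.IH snoc.prems(1) by simp
    moreover have "F (a(r := q * a r)) (nu(r := q * nu r)) = c * F a nu"
      using hom[OF rN snoc.prems(2)] .
    ultimately show "Dcomp q Ns F (a(r := q * a r)) (nu(r := q * nu r))
      = c ^ Suc (length Ns) * F a nu * Dcomp q Ns (\<lambda>_ _. 1) (a(r := q * a r)) (nu(r := q * nu r))"
      by (simp add: mult_ac)
  qed
  then show ?case by (simp add: Dcomp_def)
qed

lemma sorted_wrt_ge_last_le:
  fixes xs :: "'a :: linorder list"
  shows "sorted_wrt (\<ge>) xs \<Longrightarrow> x \<in> set xs \<Longrightarrow> last xs \<le> x"
  by (induction xs) (auto dest: last_in_set)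

theorem lemma4p5:
  fixes q :: real and N M T :: nat and kappa :: "nat list"
    and u a nu :: "nat \<Rightarrow> real"
  assumes q: "0 < q" "q < 1"
    and N: "N \<ge> 1"
    and T: "T \<ge> 1"
    and kappa: "partP' T kappa" "last kappa > N"
    and M: "M \<ge> N"
    and u: "\<forall>i\<ge>1. u i < 0"
    and a: "\<forall>i\<ge>1. 0 < a i"
    and nu: "\<forall>i\<ge>1. 0 < nu i \<and> nu i < 1"
    and bdd: "\<exists>\<epsilon>>0. \<forall>i\<ge>1. \<epsilon> \<le> a i \<and> a i \<le> 1 / \<epsilon> \<and> \<epsilon> \<le> nu i \<and> nu i \<le> 1 - \<epsilon>"
    and ac: "\<forall>i\<ge>1. \<forall>j\<ge>1. a i * (nu j / a j) < 1"
    and dist: "\<forall>i\<in>{1..N}. \<forall>j\<in>{1..N}. i \<noteq> j \<longrightarrow> a i \<noteq> a j"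
  shows "Dop q N (Ftilde q M kappa u) a nu
           = q ^ T * (1 - (\<Prod>i\<in>{1..N}. nu i)) * Ftilde q M kappa u a nu
         \<and> (\<forall>Ns. Ns \<noteq> [] \<longrightarrow> sorted_wrt (\<ge>) Ns \<longrightarrow> (\<forall>n\<in>set Ns. n \<ge> 1) \<longrightarrow> hd Ns \<le> N \<longrightarrow>
          (\<forall>i\<in>{1..N}. \<forall>j\<in>{1..N}. \<forall>k l :: nat. i \<noteq> j \<longrightarrow> q ^ k * a i \<noteq> q ^ l * a j) \<longrightarrow>
          Dcomp q Ns (Ftilde q M kappa u) a nu
            = q ^ (length Ns * T) * Ftilde q M kappa u a nu * Dcomp q Ns (\<lambda>_ _. 1) a nu)"
proof -
  have len: "length kappa = T" and sorted: "sorted_wrt (\<ge>) kappa"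
    using kappa(1) by (auto simp: partP'_def)
  have parts: "\<forall>x\<in>set kappa. N < x"
    using sorted_wrt_ge_last_le[OF sorted] kappa(2) by fastforce
  have a_pos: "\<forall>i\<in>{1..N}. 0 < a i" using a by auto
  have hom: "Ftilde q M kappa u (b(r := q * b r)) (\<mu>(r := q * \<mu> r)) = q ^ T * Ftilde q M kappa u b \<mu>"
    if r: "r \<in> {1..N}" and b: "\<forall>i\<in>{1..N}. 0 < b i" for r b \<mu>
  proof -
    have "\<forall>x\<in>set kappa. r < x" using parts r by fastforce
    then show ?thesis
      using Ftilde_shift_pos[of q r M kappa b u q \<mu>] q(1) r b M u len by auto
  qed
  have Dcomp_Ftilde: "Dcomp q Ns (Ftilde q M kappa u) a nu
      = q ^ (length Ns * T) * Ftilde q M kappa u a nu * Dcomp q Ns (\<lambda>_ _. 1) a nu"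
    if "\<forall>n\<in>set Ns. n \<le> N" for Ns
  proof -
    have pow: "(q ^ T) ^ length Ns = q ^ (length Ns * T)"
      unfolding power_mult[symmetric] by (simp only: mult.commute)
    show ?thesis
      using Dcomp_homogeneous[where F = "Ftilde q M kappa u", OF q(1) that hom a_pos] unfolding pow .
  qed
  have "Dop q N (\<lambda>_ _. 1) a nu = 1 - (\<Prod>i\<in>{1..N}. nu i)"
    using a_pos dist by (intro Dop_const_one) (auto simp: inj_on_def)
  then have "Dop q N (Ftilde q M kappa u) a nu
      = q ^ T * (1 - (\<Prod>i\<in>{1..N}. nu i)) * Ftilde q M kappa u a nu"
    using Dcomp_Ftilde[of "[N]"] by (simp add: Dcomp_def)
  moreover have "Dcomp q Ns (Ftilde q M kappa u) a nu
      = q ^ (length Ns * T) * Ftilde q M kappa u a nu * Dcomp q Ns (\<lambda>_ _. 1) a nu"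
    if "Ns \<noteq> []" "sorted_wrt (\<ge>) Ns" "hd Ns \<le> N" for Ns
  proof (rule Dcomp_Ftilde)
    show "\<forall>n\<in>set Ns. n \<le> N" using that by (cases Ns) auto
  qed
  ultimately show ?thesis by simp
qed

end
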